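(* Assume Assumptions A and B, with $F$ the supercell of Assumption B. For every bounded $F$-measurable region $\Lambda\subset\mathbb{R}^d$, every perfect configuration $\overline X$, and every admissible configuration $X$ coinciding with $\overline X$ on $\partial_F\Lambda\cup(\mathbb{R}^d\setminus\Lambda)$ (i.e., $X_{\partial_F\Lambda\cup\Lambda^c}=\overline X_{\partial_F\Lambda\cup\Lambda^c}$), $$v(X_\Lambda\mid X)=v(\overline X_\Lambda\mid\overline X).$$
   Context: Setup. Fix $d\ge1$, a non-degenerate real $d\times d$ matrix $B$, the lattice $\mathbb{L}=B\mathbb{Z}^d$, and a set $\mathbb{G}\subset\mathbb{R}^d$ that is the union of finitely many disjoint translates of $\mathbb{L}$. Fix non-empty bounded sets $T_1,\dots,T_k\subset\mathbb{R}^d$ (tiles) and a unit vector $\vec\mu=(\mu_1,\dots,\mu_k)\in\mathbb{R}^k$ with $\mu_1,\dots,\mu_k>0$. An admissible configuration is a map $\omega:\mathbb{G}\to\{0,1,\dots,k\}$ such that $\operatorname{int}(u+T_{\omega(u)})\cap\operatorname{int}(v+T_{\omega(v)})=\emptyset$ for all distinct $u,v\in\mathbb{G}$ with $\omega(u),\omega(v)\neq0$; it is identified with the set $X=\{(v,\omega(v)):v\in\mathbb{G},\ \omega(v)\neq0\}$ and called non-empty if this set is non-empty. For $x=(v,i)\in X$ write $T_x=v+T_i$, $\mu_x=\mu_i$; for $t\in\mathbb{L}$ write $t+x=(t+v,i)$, $t+X=\{t+x:x\in X\}$; for $\Lambda\subset\mathbb{R}^d$ write $X_\Lambda=\{(v,i)\in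 X:v\in\Lambda\}$. $\Omega$ is the set of admissible configurations with the topology of local convergence: $X_n\to X$ iff for every bounded $\Lambda\subset\mathbb{R}^d$, $(X_n)_\Lambda=X_\Lambda$ for all large $n$. A configuration is periodic if it is non-empty and invariant under translation by a full-rank sublattice of $\mathbb{L}$. Volume allocation. Let $S\subset\mathbb{R}^d$ be an $\mathbb{L}$-invariant set with an $\mathbb{L}$-invariant measure $\lambda$. A volume allocation is a family of measurable functions $\phi_x(\cdot\mid X):S\to[0,1]$, one for each non-empty $X\in\Omega$ and $x\in X$, such that (i) $\phi_{t+x}(t+s\mid t+X)=\phi_x(s\mid X)$ for $\lambda$-a.e. $s$, for all $t\in\mathbb{L}$; (ii) whenever $X_n\to X$ in $\Omega$ and $x\in X_n$ for all $n$, $x\in X$, then $\liminf_n\phi_x(\cdot\mid X_n)\ge\phi_x(\cdot\mid X)$ $\lambda$-a.e.; (iii) $\sum_{x\in X}\phi_x(\cdot\mid X)=1$ $\lambda$-a.e. The allocated volume is $v(x\mid X)=\int_S\phi_x(s\mid X)\,\lambda(ds)$, and $v(X'\mid X)=\sum_{x\in X'}v(x\mid X)$ for $X'\subset X$. Assumption A. There exist a volume allocation and $p_*>0$ such that (a) $p_*\,v(x\mid X)\ge\mu_x$ for every non-empty $X\in\Omega$ and $x\in X$; (b) there are only finitely many non-empty $\overline X\in\Omega$, called perfect configurations, with $p_*\,v(x\mid\overline X)=\mu_x$ for all $x\in\overline X$. Supercells. For a full-rank sublattice $\mathbb{K}\subset\mathbb{L}$, a supercell of $\mathbb{K}$ is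 a set $G=A[0,1)^d$ with $A\mathbb{Z}^d$ a full-rank sublattice of $\mathbb{K}$; its grid is $\mathcal{L}^G=A\mathbb{Z}^d$. A supercell of a periodic configuration $X$ is a supercell of $\{t\in\mathbb{L}:t+X=X\}$; a supercell common to several periodic configurations is a supercell of each of them. For $G=A[0,1)^d$ and $n\ge0$ put $G^{(n)}=\bigcup_{m\in\{-n,\dots,n\}^d}(Am+G)$. For a supercell $F$, cells are the sets $t+F$, $t\in\mathcal{L}^F$, and a set is $F$-measurable if it is a union of cells; for an $F$-measurable $\Lambda$, $\partial_F\Lambda$ is the union of the cells contained in $\Lambda$ whose closures intersect the closure of $\mathbb{R}^d\setminus\Lambda$. $F$ is larger than the interaction radius if whenever $\Lambda,\Lambda'$ are $F$-measurable with disjoint closures, $X,X'\in\Omega$, $x\in X_\Lambda$, $y\in X'_{\Lambda'}$, then $\operatorname{int}T_x\cap\operatorname{int}T_y=\emptyset$. For a perfect $\overline X$ and $X\in\Omega$, a cell $K$ is $\overline X$-correct with respect to $X$ if $X_{K^{(1)}}=\overline X_{K^{(1)}}$. Assumption B. There is a supercell $F$ common to all perfect configurations and larger than the interaction radius such that, for every perfect $\overline X$ and every $X\in\Omega$ with respect to which $F$ is $\overline X$-correct, $\phi_x(\cdot\mid X)=\phi_x(\cdot\mid\overline X)$ $\lambda$-a.e. for every $x\in X_F$. *)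

theory Defs
  imports "HOL-Analysis.Analysis"
begin

(* Points of R^d are vectors  real^'n  (d = CARD('n)).  Configurations are sets of pairs (v,i). *)

definition int_vecs :: "(real^'n) set" where
  "int_vecs = {z. \<forall>i. z$i \<in> \<int>}"

definition lattice_of :: "real^'n^'n \<Rightarrow> (real^'n) set" where
  "lattice_of B = (\<lambda>z. B *v z) ` int_vecs"

definition tile_of :: "(nat \<Rightarrow> (real^'n) set) \<Rightarrow> ((real^'n) \<times> nat) \<Rightarrow> (real^'n) set" where
  "tile_of T x = (\<lambda>s. fst x + s) ` T (snd x)"

definition admissible ::
  "(real^'n) set \<Rightarrow> nat \<Rightarrow> (nat \<Rightarrow> (real^'n) set) \<Rightarrow> ((real^'n) \<times> nat) set \<Rightarrow> bool" where
  "admissible G k T X \<longleftrightarrow>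
     (\<forall>x\<in>X. fst x \<in> G \<and> snd x \<in> {1..k}) \<and>
     (\<forall>x\<in>X. \<forall>y\<in>X. fst x = fst y \<longrightarrow> x = y) \<and>
     (\<forall>x\<in>X. \<forall>y\<in>X. fst x \<noteq> fst y \<longrightarrow>
         interior (tile_of T x) \<inter> interior (tile_of T y) = {})"

definition transl_pt :: "real^'n \<Rightarrow> ((real^'n) \<times> nat) \<Rightarrow> ((real^'n) \<times> nat)" where
  "transl_pt t x = (t + fst x, snd x)"

definition transl :: "real^'n \<Rightarrow> ((real^'n) \<times> nat) set \<Rightarrow> ((real^'n) \<times> nat) set" where
  "transl t X = transl_pt t ` X"

definition restr :: "((real^'n) \<times> nat) set \<Rightarrow> (real^'n) set \<Rightarrow> ((real^'n) \<times> nat) set" where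
  "restr X \<Lambda> = {x \<in> X. fst x \<in> \<Lambda>}"

definition loc_conv :: "(nat \<Rightarrow> ((real^'n) \<times> nat) set) \<Rightarrow> ((real^'n) \<times> nat) set \<Rightarrow> bool" where
  "loc_conv Xs X \<longleftrightarrow>
     (\<forall>\<Lambda>. bounded \<Lambda> \<longrightarrow> (\<forall>\<^sub>F n in sequentially. restr (Xs n) \<Lambda> = restr X \<Lambda>))"

(* volume allocation; phi X x s = \<phi>_x(s | X); the measure lam lives on S = space lam *)
definition volume_allocation ::
  "(real^'n) set \<Rightarrow> (((real^'n) \<times> nat) set \<Rightarrow> bool) \<Rightarrow> (real^'n) measure \<Rightarrow>
   (((real^'n) \<times> nat) set \<Rightarrow> ((real^'n) \<times> nat) \<Rightarrow> real^'n \<Rightarrow> real) \<Rightarrow> bool" where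
  "volume_allocation L adm lam phi \<longleftrightarrow>
     (\<forall>X x. adm X \<and> X \<noteq> {} \<and> x \<in> X \<longrightarrow>
        phi X x \<in> borel_measurable lam \<and>
        (\<forall>s\<in>space lam. 0 \<le> phi X x s \<and> phi X x s \<le> 1) \<and>
        (\<forall>t\<in>L. AE s in lam. phi (transl t X) (transl_pt t x) (t + s) = phi X x s)) \<and>
     (\<forall>Xs X x. (\<forall>n. adm (Xs n)) \<and> adm X \<and> loc_conv Xs X \<and> (\<forall>n. x \<in> Xs n) \<and> x \<in> X \<longrightarrow>
        (AE s in lam. liminf (\<lambda>n. ereal (phi (Xs n) x s)) \<ge> ereal (phi X x s))) \<and>
     (\<forall>X. adm X \<and> X \<noteq> {} \<longrightarrow> (AE s in lam. ((\<lambda>x. phi X x s) has_sum 1) X))"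

definition vol ::
  "(real^'n) measure \<Rightarrow> (((real^'n) \<times> nat) set \<Rightarrow> ((real^'n) \<times> nat) \<Rightarrow> real^'n \<Rightarrow> real) \<Rightarrow>
   ((real^'n) \<times> nat) \<Rightarrow> ((real^'n) \<times> nat) set \<Rightarrow> ennreal" where
  "vol lam phi x X = (\<integral>\<^sup>+ s. ennreal (phi X x s) \<partial>lam)"

definition vols ::
  "(real^'n) measure \<Rightarrow> (((real^'n) \<times> nat) set \<Rightarrow> ((real^'n) \<times> nat) \<Rightarrow> real^'n \<Rightarrow> real) \<Rightarrow>
   ((real^'n) \<times> nat) set \<Rightarrow> ((real^'n) \<times> nat) set \<Rightarrow> ennreal" where
  "vols lam phi X' X = (\<Sum>\<^sub>\<infinity>x\<in>X'. vol lam phi x X)"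

definition perfect ::
  "(((real^'n) \<times> nat) set \<Rightarrow> bool) \<Rightarrow> (real^'n) measure \<Rightarrow>
   (((real^'n) \<times> nat) set \<Rightarrow> ((real^'n) \<times> nat) \<Rightarrow> real^'n \<Rightarrow> real) \<Rightarrow> (nat \<Rightarrow> real) \<Rightarrow> real \<Rightarrow>
   ((real^'n) \<times> nat) set \<Rightarrow> bool" where
  "perfect adm lam phi mu p X \<longleftrightarrow> adm X \<and> X \<noteq> {} \<and>
     (\<forall>x\<in>X. ennreal p * vol lam phi x X = ennreal (mu (snd x)))"

definition periods :: "(real^'n) set \<Rightarrow> ((real^'n) \<times> nat) set \<Rightarrow> (real^'n) set" where
  "periods L X = {t \<in> L. transl t X = X}"

definition supercell :: "real^'n^'n \<Rightarrow> (real^'n) set" where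
  "supercell A = (\<lambda>y. A *v y) ` {y. \<forall>i. 0 \<le> y$i \<and> y$i < 1}"

definition cells :: "real^'n^'n \<Rightarrow> (real^'n) set set" where
  "cells A = {(\<lambda>s. t + s) ` supercell A | t. t \<in> lattice_of A}"

definition F_measurable :: "real^'n^'n \<Rightarrow> (real^'n) set \<Rightarrow> bool" where
  "F_measurable A \<Lambda> \<longleftrightarrow> (\<exists>C \<subseteq> cells A. \<Lambda> = \<Union>C)"

definition F_boundary :: "real^'n^'n \<Rightarrow> (real^'n) set \<Rightarrow> (real^'n) set" where
  "F_boundary A \<Lambda> = \<Union>{K \<in> cells A. K \<subseteq> \<Lambda> \<and> closure K \<inter> closure (- \<Lambda>) \<noteq> {}}"

definition nbhd1 :: "real^'n^'n \<Rightarrow> (real^'n) set \<Rightarrow> (real^'n) set" where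
  "nbhd1 A K = (\<Union>m\<in>{m::real^'n. \<forall>i. m$i \<in> {-1, 0, 1}}. (\<lambda>s. A *v m + s) ` K)"

definition larger_than_interaction_radius ::
  "(((real^'n) \<times> nat) set \<Rightarrow> bool) \<Rightarrow> (nat \<Rightarrow> (real^'n) set) \<Rightarrow> real^'n^'n \<Rightarrow> bool" where
  "larger_than_interaction_radius adm T A \<longleftrightarrow>
     (\<forall>\<Lambda> \<Lambda>' X X' x y. F_measurable A \<Lambda> \<and> F_measurable A \<Lambda>' \<and>
        closure \<Lambda> \<inter> closure \<Lambda>' = {} \<and> adm X \<and> adm X' \<and>
        x \<in> restr X \<Lambda> \<and> y \<in> restr X' \<Lambda>' \<longrightarrow>
        interior (tile_of T x) \<inter> interior (tile_of T y) = {})"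

end

theory Submission
  imports Defs
begin

(* Outside Lambda the configurations X and X-bar coincide, and so do their volume allocations:
   a point x of X outside Lambda lies in a cell disjoint from Lambda, whose neighbourhood K^(1)
   lies in the region where X agrees with X-bar; translating this cell onto F by a period of
   X-bar and applying Assumption B gives phi_x(.|X) = phi_x(.|X-bar) almost everywhere.
   Since the allocations of X and of X-bar both sum to 1, the allocations of the points inside
   Lambda then have the same sum almost everywhere, and integrating this countable sum term by
   term gives the two allocated volumes. *)

lemma int_vecs_add: "a \<in> int_vecs \<Longrightarrow> b \<in> int_vecs \<Longrightarrow> a + b \<in> int_vecs"
  unfolding int_vecs_def by auto

lemma int_vecs_uminus: "a \<in> int_vecs \<Longrightarrow> - a \<in> int_vecs"
  unfolding int_vecs_def by auto

lemma countable_int_vecs: "countable (int_vecs :: (real^'n) set)"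
proof -
  have "int_vecs \<subseteq> range (\<lambda>f::'n \<Rightarrow> int. (\<chi> i. of_int (f i)) :: real^'n)"
  proof
    fix z :: "real^'n" assume "z \<in> int_vecs"
    then have "\<forall>i. \<exists>n::int. z$i = of_int n" unfolding int_vecs_def by (auto elim: Ints_cases)
    then obtain f where "\<forall>i. z$i = of_int (f i)" by metis
    then show "z \<in> range (\<lambda>f::'n \<Rightarrow> int. (\<chi> i. of_int (f i)) :: real^'n)"
      by (auto simp: vec_eq_iff)
  qed
  then show ?thesis by (rule countable_subset) simp
qed

lemma countable_lattice_of: "countable (lattice_of M)"
  unfolding lattice_of_def by (intro countable_image countable_int_vecs)

lemma lattice_of_add: "a \<in> lattice_of M \<Longrightarrow> b \<in> lattice_of M \<Longrightarrow> a + b \<in> lattice_of M"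
  unfolding lattice_of_def
  by (auto simp: matrix_vector_right_distrib[symmetric] intro!: imageI int_vecs_add)

lemma lattice_of_uminus: "a \<in> lattice_of M \<Longrightarrow> - a \<in> lattice_of M"
  unfolding lattice_of_def
  by (auto simp: vec.neg[symmetric] intro!: imageI int_vecs_uminus)

lemma translate_lattice_of: "t \<in> lattice_of M \<Longrightarrow> (\<lambda>s. t + s) ` lattice_of M = lattice_of M"
proof (intro subset_antisym image_subsetI subsetI)
  fix s assume "t \<in> lattice_of M" "s \<in> lattice_of M"
  then have "- t + s \<in> lattice_of M" by (intro lattice_of_add lattice_of_uminus)
  then show "s \<in> (\<lambda>s. t + s) ` lattice_of M" by (rule rev_image_eqI) simp
qed (rule lattice_of_add)

lemma translate_lattice_cosets:
  assumes "t \<in> lattice_of B"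
  shows "(\<lambda>s. t + s) ` (\<Union>a\<in>offs. (\<lambda>s. a + s) ` lattice_of B) = (\<Union>a\<in>offs. (\<lambda>s. a + s) ` lattice_of B)"
proof -
  have "(\<lambda>s. t + s) ` (\<Union>a\<in>offs. (\<lambda>s. a + s) ` lattice_of B) =
      (\<Union>a\<in>offs. (\<lambda>s. a + s) ` (\<lambda>s. t + s) ` lattice_of B)"
    by (simp add: image_UN image_image add.left_commute)
  then show ?thesis using translate_lattice_of[OF assms] by simp
qed

lemma countable_lattice_cosets: "finite offs \<Longrightarrow> countable (\<Union>a\<in>offs. (\<lambda>s. a + s) ` lattice_of B)"
  by (intro countable_UN countable_image countable_lattice_of) (auto intro: countable_finite)

lemma lattice_of_supercell_cover:
  fixes A :: "real^'n^'n"
  assumes "invertible A"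
  shows "\<exists>t\<in>lattice_of A. v \<in> (\<lambda>s. t + s) ` supercell A"
proof -
  obtain A' where "A ** A' = mat 1" using assms unfolding invertible_def by blast
  then have yv: "A *v (A' *v v) = v" by (simp add: matrix_vector_mul_assoc)
  define y where "y = A' *v v"
  define z :: "real^'n" where "z = (\<chi> i. of_int \<lfloor>y$i\<rfloor>)"
  have "A *v z \<in> lattice_of A" unfolding lattice_of_def int_vecs_def z_def by auto
  moreover have "A *v (y - z) \<in> supercell A"
    unfolding supercell_def z_def by (rule imageI) (auto simp: floor_le_iff, linarith)
  moreover have "v = A *v z + A *v (y - z)"
    using yv by (simp add: y_def matrix_vector_right_distrib[symmetric])
  ultimately show ?thesis by blast
qed

lemma lattice_of_supercell_unique:
  fixes A :: "real^'n^'n"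
  assumes "invertible A" "t1 \<in> lattice_of A" "t2 \<in> lattice_of A"
    "w \<in> (\<lambda>s. t1 + s) ` supercell A" "w \<in> (\<lambda>s. t2 + s) ` supercell A"
  shows "t1 = t2"
proof -
  obtain z1 z2 where z: "z1 \<in> int_vecs" "z2 \<in> int_vecs" "t1 = A *v z1" "t2 = A *v z2"
    using assms(2,3) unfolding lattice_of_def by auto
  obtain y1 y2 where y: "\<forall>i. 0 \<le> y1$i \<and> y1$i < 1" "\<forall>i. 0 \<le> y2$i \<and> y2$i < 1"
    "w = t1 + A *v y1" "w = t2 + A *v y2"
    using assms(4,5) unfolding supercell_def by auto
  have "A *v (z1 + y1) = A *v (z2 + y2)"
    using y z by (simp add: matrix_vector_right_distrib)
  then have e: "z1 + y1 = z2 + y2"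
    using inj_matrix_vector_mult[OF assms(1)] by (rule injD[rotated])
  have "z1$i = z2$i" for i
  proof -
    have "z1$i \<in> \<int>" "z2$i \<in> \<int>" using z(1,2) unfolding int_vecs_def by auto
    then obtain a b where ab: "z1$i = of_int a" "z2$i = of_int b" by (auto elim!: Ints_cases)
    have "of_int a + y1$i = of_int b + y2$i" using e ab by (metis vector_add_component)
    then have "\<lfloor>of_int a + y1$i\<rfloor> = \<lfloor>of_int b + y2$i\<rfloor>" by simp
    moreover have "\<lfloor>y1$i\<rfloor> = 0" "\<lfloor>y2$i\<rfloor> = 0" using y(1,2) by (simp_all add: floor_eq_iff)
    ultimately show ?thesis using ab by simp
  qed
  then have "z1 = z2" by (simp add: vec_eq_iff)
  then show ?thesis using z by simp
qed

lemma F_measurable_cell_subset: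
  fixes A :: "real^'n^'n"
  assumes A: "invertible A" and \<Lambda>: "F_measurable A \<Lambda>" and t: "t \<in> lattice_of A"
    and w: "w \<in> (\<lambda>s. t + s) ` supercell A" "w \<in> \<Lambda>"
  shows "(\<lambda>s. t + s) ` supercell A \<subseteq> \<Lambda>"
proof -
  obtain C where C: "C \<subseteq> cells A" "\<Lambda> = \<Union>C" using \<Lambda> unfolding F_measurable_def by auto
  then obtain t' where t': "t' \<in> lattice_of A" "(\<lambda>s. t' + s) ` supercell A \<in> C"
    "w \<in> (\<lambda>s. t' + s) ` supercell A"
    using w(2) unfolding cells_def by blast
  have "t = t'" using lattice_of_supercell_unique[OF A t t'(1) w(1) t'(3)] .
  then show ?thesis using t'(2) C(2) by blast
qed

lemma translate_corner_in_closure_supercell: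
  assumes "\<forall>i. c$i \<in> {0,1}"
  shows "u + A *v c \<in> closure ((\<lambda>s. u + s) ` supercell A)"
proof -
  define r :: "nat \<Rightarrow> real" where "r j = 1 - inverse (real (Suc j))" for j
  have "r \<longlonglongrightarrow> 1 - 0" unfolding r_def
    by (intro tendsto_diff tendsto_const LIMSEQ_inverse_real_of_nat)
  then have "(\<lambda>j. u + r j *\<^sub>R (A *v c)) \<longlonglongrightarrow> u + 1 *\<^sub>R (A *v c)"
    by (intro tendsto_intros) simp
  then have lim: "(\<lambda>j. u + A *v (r j *\<^sub>R c)) \<longlonglongrightarrow> u + A *v c"
    by (simp add: matrix_vector_mult_scaleR)
  have mem: "u + A *v (r j *\<^sub>R c) \<in> (\<lambda>s. u + s) ` supercell A" for j
  proof -
    have r: "0 \<le> r j \<and> r j < 1" unfolding r_def by (auto simp: field_simps)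
    have "0 \<le> (r j *\<^sub>R c)$i \<and> (r j *\<^sub>R c)$i < 1" for i
      using assms r by (cases "c$i = 0") auto
    then show ?thesis unfolding supercell_def by blast
  qed
  show ?thesis unfolding closure_sequential
    by (rule exI[of _ "\<lambda>j. u + A *v (r j *\<^sub>R c)"]) (use mem lim in blast)
qed

lemma closure_neighbour_cells_meet:
  fixes A :: "real^'n^'n" and m :: "real^'n"
  assumes "\<forall>i. m$i \<in> {-1, 0, 1::real}"
  shows "closure ((\<lambda>s. t + s) ` supercell A) \<inter> closure ((\<lambda>s. (t + A *v m) + s) ` supercell A) \<noteq> {}"
proof -
  define c :: "real^'n" where "c = (\<chi> i. if m$i = 1 then 1 else 0)"
  have "\<forall>i. c$i \<in> {0,1}" "\<forall>i. (c - m)$i \<in> {0,1}"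
    using assms unfolding c_def by auto
  \<comment> \<open>the corner \<open>t + A c\<close> is shared by both cells\<close>
  moreover have "t + A *v c = (t + A *v m) + A *v (c - m)"
    by (simp add: matrix_vector_mult_diff_distrib)
  ultimately show ?thesis
    using translate_corner_in_closure_supercell by (metis disjoint_iff)
qed

lemma lattice_of_neighbour: "\<forall>i. m$i \<in> {-1, 0, 1::real} \<Longrightarrow> A *v m \<in> lattice_of A"
  unfolding lattice_of_def int_vecs_def by (rule imageI) (auto; metis Ints_0 Ints_1 Ints_minus)

lemma nbhd1_outside_cell_subset:
  fixes A :: "real^'n^'n"
  assumes A: "invertible A" and \<Lambda>: "F_measurable A \<Lambda>" and t: "t \<in> lattice_of A"
    and v: "v \<in> (\<lambda>s. t + s) ` supercell A" "v \<notin> \<Lambda>"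
  shows "(\<lambda>s. t + s) ` nbhd1 A (supercell A) \<subseteq> F_boundary A \<Lambda> \<union> - \<Lambda>"
proof
  define K where "K = (\<lambda>s. t + s) ` supercell A"
  have K: "K \<subseteq> - \<Lambda>"
    using F_measurable_cell_subset[OF A \<Lambda> t] v unfolding K_def by blast
  fix w assume "w \<in> (\<lambda>s. t + s) ` nbhd1 A (supercell A)"
  then obtain m where m: "\<forall>i. m$i \<in> {-1, 0, 1::real}"
    and w: "w \<in> (\<lambda>s. (t + A *v m) + s) ` supercell A"
    unfolding nbhd1_def by (auto simp: add.assoc)
  define K' where "K' = (\<lambda>s. (t + A *v m) + s) ` supercell A"
  have tm: "t + A *v m \<in> lattice_of A" using lattice_of_add[OF t lattice_of_neighbour[OF m]] .
  show "w \<in> F_boundary A \<Lambda> \<union> - \<Lambda>"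
  proof (cases "w \<in> \<Lambda>")
    case True
    then have "K' \<subseteq> \<Lambda>" unfolding K'_def using F_measurable_cell_subset[OF A \<Lambda> tm w] by blast
    moreover have "closure K' \<inter> closure (- \<Lambda>) \<noteq> {}"
      using closure_neighbour_cells_meet[OF m] closure_mono[OF K] unfolding K_def K'_def by blast
    moreover have "K' \<in> cells A" using tm unfolding K'_def cells_def by blast
    ultimately show ?thesis using w unfolding F_boundary_def K'_def by blast
  qed simp
qed

lemma supercell_subset_nbhd1: "supercell A \<subseteq> nbhd1 A (supercell A)"
proof
  fix f assume "f \<in> supercell A"
  then show "f \<in> nbhd1 A (supercell A)" unfolding nbhd1_def by (intro UN_I[of 0]) auto
qed

lemma transl_transl: "transl a (transl b Y) = transl (a + b) Y"
  unfolding transl_def transl_pt_def by (auto simp: image_image add.assoc)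

lemma transl_0: "transl 0 Y = Y"
  unfolding transl_def transl_pt_def by auto

lemma restr_transl: "restr (transl u Y) N = transl u (restr Y {v. u + v \<in> N})"
  unfolding restr_def transl_def transl_pt_def by auto

lemma restr_eq_subset: "restr X D = restr Y D \<Longrightarrow> E \<subseteq> D \<Longrightarrow> restr X E = restr Y E"
  unfolding restr_def by (auto simp: set_eq_iff)

lemma admissible_transl:
  assumes "admissible G k T X" "\<forall>g\<in>G. t + g \<in> G"
  shows "admissible G k T (transl t X)"
proof -
  have "tile_of T (t + a, i) = (\<lambda>s. t + s) ` tile_of T (a, i)" for a i
    unfolding tile_of_def by (auto simp: image_image add.assoc)
  with assms show ?thesis
    unfolding admissible_def transl_def
    by (auto simp: interior_translation transl_pt_def image_Int[symmetric] inj_on_def)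
qed

lemma countable_admissible:
  assumes "countable G" "admissible G k T X"
  shows "countable X"
proof -
  have "inj_on fst X" "fst ` X \<subseteq> G" using assms(2) unfolding admissible_def inj_on_def by auto
  then show ?thesis using assms(1) countable_image_inj_on countable_subset by blast
qed

lemma periodic_restr_complement_nonempty:
  fixes A :: "real^'n^'n"
  assumes A: "invertible A" and periodic: "\<forall>t\<in>lattice_of A. transl t Y = Y"
    and "Y \<noteq> {}" and "bounded \<Lambda>"
  shows "restr Y (- \<Lambda>) \<noteq> {}"
proof -
  obtain y where y: "y \<in> Y" using \<open>Y \<noteq> {}\<close> by blast
  obtain r where r: "\<forall>v\<in>\<Lambda>. norm v \<le> r" using \<open>bounded \<Lambda>\<close> bounded_iff by blast
  define one :: "real^'n" where "one = (\<chi> i. 1)"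
  define w where "w = A *v one"
  have "one \<noteq> 0" unfolding one_def by (simp add: vec_eq_iff)
  then have "w \<noteq> A *v 0" unfolding w_def using inj_matrix_vector_mult[OF A] by (metis injD)
  then obtain j :: nat where j: "real j * norm w > r + norm (fst y)"
    using reals_Archimedean3[of "norm w"] by auto
  \<comment> \<open>translating \<open>y\<close> far enough along the lattice direction \<open>w\<close> leaves \<open>\<Lambda>\<close>\<close>
  define t where "t = real j *\<^sub>R w"
  have "t = A *v (real j *\<^sub>R one)" unfolding t_def w_def by (simp add: matrix_vector_mult_scaleR)
  moreover have "real j *\<^sub>R one \<in> int_vecs" unfolding int_vecs_def one_def by simp
  ultimately have "t \<in> lattice_of A" unfolding lattice_of_def by blast
  then have "transl_pt t y \<in> Y"
    using periodic y unfolding transl_def by blast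
  moreover have "norm (t + fst y) > r"
  proof -
    have "norm t \<le> norm (t + fst y) + norm (fst y)"
      using norm_triangle_ineq[of "t + fst y" "- fst y"] by simp
    then show ?thesis using j unfolding t_def by simp
  qed
  ultimately show ?thesis using r unfolding restr_def transl_pt_def by fastforce
qed

lemma AE_translate:
  fixes M :: "('a::ab_group_add) measure"
  assumes space: "(\<lambda>s. t + s) ` space M = space M"
    and measure_inv: "\<forall>E\<in>sets M. (\<lambda>s. t + s) ` E \<in> sets M \<and> emeasure M ((\<lambda>s. t + s) ` E) = emeasure M E"
    and "AE s in M. P (t + s)"
  shows "AE s in M. P s"
proof -
  obtain N where N: "{s \<in> space M. \<not> P (t + s)} \<subseteq> N" "N \<in> null_sets M"
    using \<open>AE s in M. P (t + s)\<close> by (auto elim!: AE_E)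
  have "(\<lambda>s. t + s) ` N \<in> null_sets M" using measure_inv N(2) by (auto simp: null_sets_def)
  moreover have "{u \<in> space M. \<not> P u} \<subseteq> (\<lambda>s. t + s) ` N"
  proof
    fix u assume u: "u \<in> {u \<in> space M. \<not> P u}"
    then obtain s where "s \<in> space M" "u = t + s" using space by blast
    with u N(1) show "u \<in> (\<lambda>s. t + s) ` N" by blast
  qed
  ultimately show ?thesis by (rule AE_I')
qed

lemma nn_integral_infsum:
  fixes f :: "'a \<Rightarrow> 'b \<Rightarrow> ennreal"
  assumes "countable A" and meas: "\<And>x. x \<in> A \<Longrightarrow> f x \<in> borel_measurable M"
  shows "(\<integral>\<^sup>+ s. (\<Sum>\<^sub>\<infinity>x\<in>A. f x s) \<partial>M) = (\<Sum>\<^sub>\<infinity>x\<in>A. \<integral>\<^sup>+ s. f x s \<partial>M)"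
proof (cases "finite A")
  case True
  then show ?thesis using meas by (simp add: nn_integral_sum)
next
  case False
  define e where "e = from_nat_into A"
  have e: "bij_betw e UNIV A" unfolding e_def using bij_betw_from_nat_into[OF \<open>countable A\<close> False] .
  have infsum_suminf: "infsum g A = (\<Sum>n. g (e n))" for g :: "'a \<Rightarrow> ennreal"
  proof -
    have "((g \<circ> e) has_sum infsum (g \<circ> e) UNIV) UNIV"
      by (rule has_sum_infsum) (simp add: nonneg_summable_on_complete)
    then have "(g \<circ> e) sums infsum (g \<circ> e) UNIV" by (rule has_sum_imp_sums)
    then show ?thesis using infsum_reindex_bij_betw[OF e, of g] by (simp add: sums_iff o_def)
  qed
  have "(\<integral>\<^sup>+ s. (\<Sum>n. f (e n) s) \<partial>M) = (\<Sum>n. \<integral>\<^sup>+ s. f (e n) s \<partial>M)"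
    using meas bij_betwE[OF e] by (intro nn_integral_suminf) blast
  then show ?thesis by (simp add: infsum_suminf)
qed

lemma infsum_ennreal:
  fixes f :: "'a \<Rightarrow> real"
  assumes "f summable_on A" "\<And>x. x \<in> A \<Longrightarrow> f x \<ge> 0"
  shows "(\<Sum>\<^sub>\<infinity>x\<in>A. ennreal (f x)) = ennreal (infsum f A)"
proof -
  have "sum (ennreal \<circ> f) F = ennreal (sum f F)" if "finite F" "F \<subseteq> A" for F
    using that assms(2) by (auto intro: sum_ennreal)
  then have "infsum (ennreal \<circ> f) A = ennreal (infsum f A)"
    by (simp add: infsum_comm_additive_general assms(1))
  then show ?thesis by (simp add: o_def)
qed

lemma infsum_diff_eq_if_has_sum_agree:
  fixes a b :: "'a \<Rightarrow> 'b::banach"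
  assumes a: "(a has_sum s) X" and b: "(b has_sum s) Y"
    and "X \<inter> C = Y \<inter> C" and "\<forall>x\<in>X \<inter> C. a x = b x"
  shows "infsum a (X - C) = infsum b (Y - C)"
proof -
  have split: "infsum f Z = infsum f (Z - C) + infsum f (Z \<inter> C)" if "f summable_on Z"
    for f :: "'a \<Rightarrow> 'b" and Z
  proof -
    have "f summable_on Z - C" "f summable_on Z \<inter> C"
      using summable_on_subset_banach[OF that] by auto
    moreover have "(Z - C) \<inter> (Z \<inter> C) = {}" by blast
    ultimately show ?thesis by (metis infsum_Un_disjoint Un_Diff_Int)
  qed
  have "infsum a (X \<inter> C) = infsum b (Y \<inter> C)" using assms(3,4) by (metis infsum_cong)
  moreover have "infsum a X = infsum b Y" using a b by (simp add: infsumI)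
  moreover have "a summable_on X" "b summable_on Y" using a b by (auto simp: summable_on_def)
  ultimately show ?thesis using split by (metis add_right_cancel)
qed

lemma volume_allocation_measurable:
  "volume_allocation L adm lam phi \<Longrightarrow> adm X \<Longrightarrow> X \<noteq> {} \<Longrightarrow> x \<in> X \<Longrightarrow>
    phi X x \<in> borel_measurable lam"
  unfolding volume_allocation_def by meson

lemma volume_allocation_nonneg:
  "volume_allocation L adm lam phi \<Longrightarrow> adm X \<Longrightarrow> X \<noteq> {} \<Longrightarrow> x \<in> X \<Longrightarrow> s \<in> space lam \<Longrightarrow>
    0 \<le> phi X x s"
  unfolding volume_allocation_def by meson

lemma volume_allocation_transl:
  "volume_allocation L adm lam phi \<Longrightarrow> adm X \<Longrightarrow> X \<noteq> {} \<Longrightarrow> x \<in> X \<Longrightarrow> t \<in> L \<Longrightarrow>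
    AE s in lam. phi (transl t X) (transl_pt t x) (t + s) = phi X x s"
  unfolding volume_allocation_def by meson

lemma volume_allocation_has_sum:
  "volume_allocation L adm lam phi \<Longrightarrow> adm X \<Longrightarrow> X \<noteq> {} \<Longrightarrow>
    AE s in lam. ((\<lambda>x. phi X x s) has_sum 1) X"
  unfolding volume_allocation_def by meson

lemma vols_eq_nn_integral_infsum:
  assumes "countable X'" "\<forall>x\<in>X'. phi X x \<in> borel_measurable lam"
  shows "vols lam phi X' X = (\<integral>\<^sup>+ s. (\<Sum>\<^sub>\<infinity>x\<in>X'. ennreal (phi X x s)) \<partial>lam)"
  unfolding vols_def vol_def using assms by (subst nn_integral_infsum) auto

lemma vols_restr_eq_if_AE_eq_outside:
  fixes X Y :: "((real^'n) \<times> nat) set"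
  assumes alloc: "volume_allocation L adm lam phi"
    and X: "adm X" "X \<noteq> {}" "countable X" and Y: "adm Y" "Y \<noteq> {}" "countable Y"
    and agree: "restr X (- \<Lambda>) = restr Y (- \<Lambda>)"
    and eq: "\<forall>x\<in>restr X (- \<Lambda>). AE s in lam. phi X x s = phi Y x s"
  shows "vols lam phi (restr X \<Lambda>) X = vols lam phi (restr Y \<Lambda>) Y"
proof -
  define C :: "((real^'n) \<times> nat) set" where "C = {x. fst x \<notin> \<Lambda>}"
  have restr_C: "restr Z \<Lambda> = Z - C" "restr Z (- \<Lambda>) = Z \<inter> C" for Z
    unfolding restr_def C_def by auto
  have sum_ennreal: "(\<Sum>\<^sub>\<infinity>x\<in>Z - C. ennreal (phi Z x s)) = ennreal (\<Sum>\<^sub>\<infinity>x\<in>Z - C. phi Z x s)"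
    if "adm Z" "Z \<noteq> {}" "s \<in> space lam" "((\<lambda>x. phi Z x s) has_sum 1) Z" for Z s
  proof (rule infsum_ennreal)
    have "(\<lambda>x. phi Z x s) summable_on Z" using that(4) by (auto simp: summable_on_def)
    then show "(\<lambda>x. phi Z x s) summable_on Z - C" by (rule summable_on_subset_banach) auto
  qed (use that volume_allocation_nonneg[OF alloc] in auto)
  have "AE s in lam. \<forall>x\<in>X \<inter> C. phi X x s = phi Y x s"
    using eq X(3) by (subst AE_ball_countable) (auto simp: restr_C intro: countable_subset)
  then have "AE s in lam. (\<Sum>\<^sub>\<infinity>x\<in>X - C. ennreal (phi X x s)) = (\<Sum>\<^sub>\<infinity>x\<in>Y - C. ennreal (phi Y x s))"
    using volume_allocation_has_sum[OF alloc X(1,2)] volume_allocation_has_sum[OF alloc Y(1,2)] AE_space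
  proof eventually_elim
    case (elim s)
    then have "(\<Sum>\<^sub>\<infinity>x\<in>X - C. phi X x s) = (\<Sum>\<^sub>\<infinity>x\<in>Y - C. phi Y x s)"
      using agree by (intro infsum_diff_eq_if_has_sum_agree) (auto simp: restr_C)
    then show ?case using elim sum_ennreal X Y by simp
  qed
  moreover have "countable (Z - C)" "\<forall>x\<in>Z - C. phi Z x \<in> borel_measurable lam"
    if "adm Z" "Z \<noteq> {}" "countable Z" for Z
    using that volume_allocation_measurable[OF alloc] by auto
  ultimately show ?thesis
    using X Y by (simp add: restr_C vols_eq_nn_integral_infsum cong: nn_integral_cong_AE)
qed

lemma restr_transl_nbhd1_eq:
  fixes A :: "real^'n^'n"
  assumes A: "invertible A" and \<Lambda>: "F_measurable A \<Lambda>"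
    and periodic: "\<forall>t\<in>lattice_of A. transl t Y = Y"
    and agree: "restr X (F_boundary A \<Lambda> \<union> - \<Lambda>) = restr Y (F_boundary A \<Lambda> \<union> - \<Lambda>)"
    and t: "t \<in> lattice_of A" and v: "v \<in> (\<lambda>s. t + s) ` supercell A" "v \<notin> \<Lambda>"
  shows "restr (transl (- t) X) (nbhd1 A (supercell A)) = restr Y (nbhd1 A (supercell A))"
proof -
  define N where "N = nbhd1 A (supercell A)"
  have "{u. - t + u \<in> N} \<subseteq> (\<lambda>s. t + s) ` N" by (auto intro: rev_image_eqI)
  then have "{u. - t + u \<in> N} \<subseteq> F_boundary A \<Lambda> \<union> - \<Lambda>"
    using nbhd1_outside_cell_subset[OF A \<Lambda> t v] unfolding N_def by blast
  then have "restr (transl (- t) X) N = transl (- t) (restr Y {u. - t + u \<in> N})"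
    using restr_eq_subset[OF agree] by (simp add: restr_transl)
  also have "\<dots> = restr (transl (- t) Y) N" by (simp add: restr_transl)
  also have "\<dots> = restr Y N" using periodic lattice_of_uminus[OF t] by simp
  finally show ?thesis unfolding N_def .
qed

lemma volume_allocation_AE_eq_outside:
  fixes A :: "real^'n^'n"
  assumes alloc: "volume_allocation L (admissible G k T) lam phi"
    and G_inv: "\<forall>t\<in>L. (\<lambda>s. t + s) ` G = G"
    and space_inv: "\<forall>t\<in>L. (\<lambda>s. t + s) ` space lam = space lam"
    and lam_inv: "\<forall>t\<in>L. \<forall>E\<in>sets lam. (\<lambda>s. t + s) ` E \<in> sets lam \<and>
                     emeasure lam ((\<lambda>s. t + s) ` E) = emeasure lam E"
    and A: "invertible A" "lattice_of A \<subseteq> L"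
    and Y: "admissible G k T Y" "Y \<noteq> {}" "\<forall>t\<in>lattice_of A. transl t Y = Y"
    and Y_local: "\<forall>Z. admissible G k T Z \<and>
                     restr Z (nbhd1 A (supercell A)) = restr Y (nbhd1 A (supercell A)) \<longrightarrow>
                     (\<forall>x\<in>restr Z (supercell A). AE s in lam. phi Z x s = phi Y x s)"
    and \<Lambda>: "F_measurable A \<Lambda>"
    and X: "admissible G k T X"
    and agree: "restr X (F_boundary A \<Lambda> \<union> - \<Lambda>) = restr Y (F_boundary A \<Lambda> \<union> - \<Lambda>)"
    and x: "x \<in> restr X (- \<Lambda>)"
  shows "AE s in lam. phi X x s = phi Y x s"
proof -
  obtain t where t: "t \<in> lattice_of A" and xt: "fst x \<in> (\<lambda>s. t + s) ` supercell A"
    using lattice_of_supercell_cover[OF A(1)] by blast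
  have tL: "t \<in> L" using A(2) t by blast
  \<comment> \<open>move the cell of \<open>x\<close> to the reference supercell, where Assumption B applies\<close>
  define X' where "X' = transl (- t) X"
  define x' where "x' = transl_pt (- t) x"
  have "- t + g \<in> G" if "g \<in> G" for g
  proof -
    obtain g' where "g' \<in> G" "g = t + g'" using G_inv tL \<open>g \<in> G\<close> by blast
    then show ?thesis by simp
  qed
  then have X'_adm: "admissible G k T X'"
    unfolding X'_def by (intro admissible_transl[OF X]) blast
  have X'_agree: "restr X' (nbhd1 A (supercell A)) = restr Y (nbhd1 A (supercell A))"
    unfolding X'_def using x by (intro restr_transl_nbhd1_eq[OF A(1) \<Lambda> Y(3) agree t xt]) (simp add: restr_def)
  have x'_X': "x' \<in> restr X' (supercell A)"
    using x xt unfolding X'_def x'_def transl_def restr_def transl_pt_def by force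
  then have x'_Y: "x' \<in> Y"
    using X'_agree supercell_subset_nbhd1 unfolding restr_def by blast
  have X'_back: "transl t X' = X" "transl_pt t x' = x"
    unfolding X'_def x'_def by (simp_all add: transl_transl transl_0 transl_pt_def)
  have "x' \<in> X'" using x'_X' unfolding restr_def by blast
  have "transl t Y = Y" using Y(3) t by blast
  have "AE s in lam. phi X' x' s = phi Y x' s" using Y_local X'_adm X'_agree x'_X' by blast
  moreover have "AE s in lam. phi X x (t + s) = phi X' x' s"
    using volume_allocation_transl[OF alloc X'_adm _ \<open>x' \<in> X'\<close> tL] \<open>x' \<in> X'\<close>
    unfolding X'_back by blast
  moreover have "AE s in lam. phi Y x (t + s) = phi Y x' s"
    using volume_allocation_transl[OF alloc Y(1,2) x'_Y tL]
    unfolding X'_back(2) \<open>transl t Y = Y\<close> .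
  ultimately have shifted: "AE s in lam. phi X x (t + s) = phi Y x (t + s)" by eventually_elim simp
  show ?thesis by (rule AE_translate[OF _ _ shifted]) (use space_inv lam_inv tL in blast)+
qed

theorem lemma5:
  fixes B :: "real^'n^'n" and L G :: "(real^'n) set" and offs :: "(real^'n) set"
    and k :: nat and T :: "nat \<Rightarrow> (real^'n) set" and mu :: "nat \<Rightarrow> real"
    and S :: "(real^'n) set" and lam :: "(real^'n) measure"
    and phi :: "((real^'n) \<times> nat) set \<Rightarrow> ((real^'n) \<times> nat) \<Rightarrow> real^'n \<Rightarrow> real"
    and p :: real and A :: "real^'n^'n"
    and \<Lambda> :: "(real^'n) set" and Xb X :: "((real^'n) \<times> nat) set"
  assumes B: "invertible B" and L: "L = lattice_of B"
    and offs: "finite offs"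
      "\<forall>a\<in>offs. \<forall>b\<in>offs. a \<noteq> b \<longrightarrow> ((\<lambda>s. a + s) ` L) \<inter> ((\<lambda>s. b + s) ` L) = {}"
    and G: "G = (\<Union>a\<in>offs. (\<lambda>s. a + s) ` L)"
    and tiles: "\<forall>i\<in>{1..k}. bounded (T i) \<and> T i \<noteq> {}"
    and mu_pos: "\<forall>i\<in>{1..k}. mu i > 0" and mu_unit: "(\<Sum>i=1..k. (mu i)\<^sup>2) = 1"
    and S: "space lam = S" "\<forall>t\<in>L. (\<lambda>s. t + s) ` S = S"
    and lam_inv: "\<forall>t\<in>L. \<forall>E\<in>sets lam. (\<lambda>s. t + s) ` E \<in> sets lam \<and>
                     emeasure lam ((\<lambda>s. t + s) ` E) = emeasure lam E"
    and alloc: "volume_allocation L (admissible G k T) lam phi"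
    (* Assumption A *)
    and p_pos: "p > 0"
    and A_a: "\<forall>Y. admissible G k T Y \<and> Y \<noteq> {} \<longrightarrow>
                 (\<forall>x\<in>Y. ennreal p * vol lam phi x Y \<ge> ennreal (mu (snd x)))"
    and A_b: "finite {Y. perfect (admissible G k T) lam phi mu p Y}"
    (* Assumption B *)
    and F_cell: "invertible A"
    and F_common: "\<forall>Y. perfect (admissible G k T) lam phi mu p Y \<longrightarrow>
                     lattice_of A \<subseteq> periods L Y"
    and F_radius: "larger_than_interaction_radius (admissible G k T) T A"
    and F_local: "\<forall>Y Z. perfect (admissible G k T) lam phi mu p Y \<and> admissible G k T Z \<and>
                     restr Z (nbhd1 A (supercell A)) = restr Y (nbhd1 A (supercell A)) \<longrightarrow>
                     (\<forall>x\<in>restr Z (supercell A). AE s in lam. phi Z x s = phi Y x s)"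
    (* the data of the lemma *)
    and Lam: "bounded \<Lambda>" "F_measurable A \<Lambda>"
    and Xb: "perfect (admissible G k T) lam phi mu p Xb"
    and X: "admissible G k T X"
    and agree: "restr X (F_boundary A \<Lambda> \<union> - \<Lambda>) = restr Xb (F_boundary A \<Lambda> \<union> - \<Lambda>)"
  shows "vols lam phi (restr X \<Lambda>) X = vols lam phi (restr Xb \<Lambda>) Xb"
proof -
  have Xb_adm: "admissible G k T Xb" and "Xb \<noteq> {}" using Xb unfolding perfect_def by auto
  have A_L: "lattice_of A \<subseteq> L" and Xb_periodic: "\<forall>t\<in>lattice_of A. transl t Xb = Xb"
    using F_common Xb unfolding periods_def by auto
  have G_inv: "\<forall>t\<in>L. (\<lambda>s. t + s) ` G = G"
    unfolding G L by (simp add: translate_lattice_cosets)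
  have outside: "restr X (- \<Lambda>) = restr Xb (- \<Lambda>)" using restr_eq_subset[OF agree] by blast
  have "X \<noteq> {}"
    using periodic_restr_complement_nonempty[OF F_cell Xb_periodic \<open>Xb \<noteq> {}\<close> Lam(1)] outside
    unfolding restr_def by auto
  have "countable G" unfolding G L using offs(1) by (rule countable_lattice_cosets)
  then have "countable X" "countable Xb"
    using countable_admissible X Xb_adm by blast+
  have space_inv: "\<forall>t\<in>L. (\<lambda>s. t + s) ` space lam = space lam" using S by simp
  have Xb_local: "\<forall>Z. admissible G k T Z \<and>
      restr Z (nbhd1 A (supercell A)) = restr Xb (nbhd1 A (supercell A)) \<longrightarrow>
      (\<forall>x\<in>restr Z (supercell A). AE s in lam. phi Z x s = phi Xb x s)"
    using F_local Xb by meson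
  have "\<forall>x\<in>restr X (- \<Lambda>). AE s in lam. phi X x s = phi Xb x s"
    using volume_allocation_AE_eq_outside[OF alloc G_inv space_inv lam_inv F_cell A_L Xb_adm
        \<open>Xb \<noteq> {}\<close> Xb_periodic Xb_local Lam(2) X agree] by (rule ballI)
  then show ?thesis
    by (rule vols_restr_eq_if_AE_eq_outside[OF alloc X \<open>X \<noteq> {}\<close> \<open>countable X\<close>
        Xb_adm \<open>Xb \<noteq> {}\<close> \<open>countable Xb\<close> outside])
qed

end
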